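(* Let $(V,m)$ be a discrete measure space and $(b,c)$ a graph over $(V,m)$. The following are equivalent: (i) $Q^{(N)}\neq Q^{(D)}$, i.e. $D(Q^{(N)})/D(Q^{(D)})\neq\{0\}$; (ii) there exists $u\in D(Q^{(N)})$, $u\not\equiv0$, with $(\widetilde L+1)u=0$; (iii) there exists $u\in D(Q^{(N)})\cap\ell^\infty(V)$, $u\not\equiv0$, with $(\widetilde L+1)u=0$.
   Context: $V$ is a finite or countably infinite set and $m:V\to(0,\infty)$; $(V,m)$ is a discrete measure space. $C(V)$ is the set of all functions $V\to\mathbb C$, $C_c(V)$ the finitely supported ones, and $\ell^2(V,m)$ carries $\langle u,v\rangle=\sum_x u(x)\overline{v(x)}m(x)$. A graph over $(V,m)$ is a pair $(b,c)$ with $c:V\to[0,\infty)$, $b:V\times V\to[0,\infty)$, $b(x,x)=0$, $b(x,y)=b(y,x)$, $\sum_y b(x,y)<\infty$. Let $\widetilde F=\{u\in C(V):\sum_y|b(x,y)u(y)|<\infty\ \forall x\}$ and $\widetilde L u(x)=\frac{1}{m(x)}\sum_y b(x,y)(u(x)-u(y))+\frac{c(x)}{m(x)}u(x)$ for $u\in\widetilde F$. $Q^{(N)}$ is the form on $\ell^2(V,m)$ with domain $D(Q^{(N)})=\{u\in\ell^2(V,m):\frac12\sum_{x,y}b(x,y)|u(x)-u(y)|^2+\sum_x c(x)|u(x)|^2<\infty\}$ and $Q^{(N)}(u,v)=\frac12\sum_{x,y}b(x,y)(u(x)-u(y))\overline{(v(x)-v(y))}+\sum_x c(x)u(x)\overline{v(x)}$;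 it is non-negative, symmetric and closed, and $D(Q^{(N)})\subseteq\widetilde F$. $Q^{(D)}$ is the closure of the restriction of $Q^{(N)}$ to $C_c(V)$. *)

theory Defs
  imports "HOL-Analysis.Analysis"
begin

text \<open>Vertex set V is modelled by a countable type 'v (finite or countably infinite).
  Functions V \<rightarrow> C are of type 'v \<Rightarrow> complex.\<close>

definition is_graph :: "('v \<Rightarrow> real) \<Rightarrow> ('v \<Rightarrow> 'v \<Rightarrow> real) \<Rightarrow> ('v \<Rightarrow> real) \<Rightarrow> bool" where
  "is_graph m b c \<longleftrightarrow>
     (\<forall>x. m x > 0) \<and> (\<forall>x. c x \<ge> 0) \<and> (\<forall>x y. b x y \<ge> 0) \<and> (\<forall>x. b x x = 0) \<and>
     (\<forall>x y. b x y = b y x) \<and> (\<forall>x. (\<lambda>y. b x y) summable_on UNIV)"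

definition l2 :: "('v \<Rightarrow> real) \<Rightarrow> ('v \<Rightarrow> complex) set" where
  "l2 m = {u. (\<lambda>x. (cmod (u x))\<^sup>2 * m x) summable_on UNIV}"

definition l2_norm_sq :: "('v \<Rightarrow> real) \<Rightarrow> ('v \<Rightarrow> complex) \<Rightarrow> real" where
  "l2_norm_sq m u = (\<Sum>\<^sub>\<infinity>x. (cmod (u x))\<^sup>2 * m x)"

definition linfty :: "('v \<Rightarrow> complex) set" where
  "linfty = {u. \<exists>C. \<forall>x. cmod (u x) \<le> C}"

definition finsupp :: "('v \<Rightarrow> complex) set" where
  "finsupp = {u. finite {x. u x \<noteq> 0}}"

definition QN_dom :: "('v \<Rightarrow> real) \<Rightarrow> ('v \<Rightarrow> 'v \<Rightarrow> real) \<Rightarrow> ('v \<Rightarrow> real) \<Rightarrow> ('v \<Rightarrow> complex) set" where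
  "QN_dom m b c = {u. u \<in> l2 m \<and>
      (\<lambda>(x,y). b x y * (cmod (u x - u y))\<^sup>2) summable_on UNIV \<and>
      (\<lambda>x. c x * (cmod (u x))\<^sup>2) summable_on UNIV}"

definition QN :: "('v \<Rightarrow> 'v \<Rightarrow> real) \<Rightarrow> ('v \<Rightarrow> real) \<Rightarrow> ('v \<Rightarrow> complex) \<Rightarrow> real" where
  "QN b c u = (1/2) * (\<Sum>\<^sub>\<infinity>(x,y). b x y * (cmod (u x - u y))\<^sup>2) + (\<Sum>\<^sub>\<infinity>x. c x * (cmod (u x))\<^sup>2)"

text \<open>Domain of Q^(D): closure of C_c(V) in D(Q^(N)) w.r.t. the form norm
  (Q^(N)(u,u) + \<parallel>u\<parallel>^2)^(1/2).\<close>
definition QD_dom :: "('v \<Rightarrow> real) \<Rightarrow> ('v \<Rightarrow> 'v \<Rightarrow> real) \<Rightarrow> ('v \<Rightarrow> real) \<Rightarrow> ('v \<Rightarrow> complex) set" where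
  "QD_dom m b c = {u. u \<in> QN_dom m b c \<and>
      (\<exists>\<phi> :: nat \<Rightarrow> 'v \<Rightarrow> complex. (\<forall>n. \<phi> n \<in> finsupp \<and> (\<lambda>x. u x - \<phi> n x) \<in> QN_dom m b c) \<and>
         (\<lambda>n. QN b c ((\<lambda>x. u x - \<phi> n x)) + l2_norm_sq m ((\<lambda>x. u x - \<phi> n x))) \<longlonglongrightarrow> 0)}"

definition Ftilde :: "('v \<Rightarrow> 'v \<Rightarrow> real) \<Rightarrow> ('v \<Rightarrow> complex) set" where
  "Ftilde b = {u. \<forall>x. (\<lambda>y. cmod (complex_of_real (b x y) * u y)) summable_on UNIV}"

definition Ltilde :: "('v \<Rightarrow> real) \<Rightarrow> ('v \<Rightarrow> 'v \<Rightarrow> real) \<Rightarrow> ('v \<Rightarrow> real) \<Rightarrow> ('v \<Rightarrow> complex) \<Rightarrow> 'v \<Rightarrow> complex" where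
  "Ltilde m b c u x = complex_of_real (1 / m x) * (\<Sum>\<^sub>\<infinity>y. complex_of_real (b x y) * (u x - u y))
                      + complex_of_real (c x / m x) * u x"

end

theory Submission
  imports Defs
begin

text \<open>
  Write \<open>q(u) = Q\<^sup>N(u,u) + \<parallel>u\<parallel>\<^sup>2\<close> for the form norm on \<open>D(Q\<^sup>N)\<close> and \<open>B\<close> for the
  associated sesquilinear form.  A discrete Green formula gives
  \<open>B(u, \<delta>\<^sub>z) = m(z) ((\<widetilde>L + 1) u)(z)\<close>, so the solutions of \<open>(\<widetilde>L + 1) u = 0\<close> in \<open>D(Q\<^sup>N)\<close>
  (called 1-harmonic below) are exactly the \<open>B\<close>-orthogonal complement of \<open>C\<^sub>c(V)\<close>, and hence
  satisfy \<open>q(u) \<le> q(u - v)\<close> for all \<open>v \<in> D(Q\<^sup>D)\<close>.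
  (ii) \<open>\<Rightarrow>\<close> (i): a 1-harmonic \<open>u\<close> lying in \<open>D(Q\<^sup>D)\<close> satisfies \<open>q(u) \<le> q(0) = 0\<close>.
  (i) \<open>\<Rightarrow>\<close> (ii): for \<open>w \<notin> D(Q\<^sup>D)\<close> minimise \<open>q(w - \<phi>)\<close> over \<open>\<phi> \<in> C\<^sub>c(V)\<close>; by the parallelogram
  law a minimising sequence converges in \<open>q\<close> to some \<open>h \<noteq> 0\<close>, and the minimality of \<open>h\<close>
  against perturbations \<open>t \<delta>\<^sub>z\<close> forces \<open>B(h, \<delta>\<^sub>z) = 0\<close>, i.e. \<open>h\<close> is 1-harmonic.
  (ii) \<open>\<Rightarrow>\<close> (iii): the truncation \<open>w\<close> of a 1-harmonic \<open>u\<close> to a disc is still outside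
  \<open>D(Q\<^sup>D)\<close>, since \<open>Re B(u, w) > 0\<close>; truncating a minimising sequence for \<open>w\<close> does not
  increase \<open>q\<close>, so the resulting 1-harmonic limit is bounded by the same radius.
\<close>

section \<open>Weighted square sums\<close>

text \<open>The three parts of the graph form (edges, killing term, measure) are all of this shape.\<close>

definition wsummable :: "('i \<Rightarrow> real) \<Rightarrow> ('i \<Rightarrow> complex) \<Rightarrow> bool" where
  "wsummable w g \<longleftrightarrow> (\<lambda>i. w i * (cmod (g i))\<^sup>2) summable_on UNIV"

definition wnorm2 :: "('i \<Rightarrow> real) \<Rightarrow> ('i \<Rightarrow> complex) \<Rightarrow> real" where
  "wnorm2 w g = (\<Sum>\<^sub>\<infinity>i. w i * (cmod (g i))\<^sup>2)"

definition winner :: "('i \<Rightarrow> real) \<Rightarrow> ('i \<Rightarrow> complex) \<Rightarrow> ('i \<Rightarrow> complex) \<Rightarrow> complex" where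
  "winner w g k = (\<Sum>\<^sub>\<infinity>i. complex_of_real (w i) * (g i * cnj (k i)))"

lemma summable_on_real_comparison:
  fixes f g :: "'i \<Rightarrow> real"
  assumes "g summable_on A" "\<And>x. x \<in> A \<Longrightarrow> 0 \<le> f x" "\<And>x. x \<in> A \<Longrightarrow> f x \<le> g x"
  shows "f summable_on A"
proof -
  have "(\<lambda>x. norm (g x)) summable_on A" using assms(1) summable_on_iff_abs_summable_on_real by blast
  then have "(\<lambda>x. norm (f x)) summable_on A"
    by (rule Infinite_Sum.abs_summable_on_comparison_test) (use assms in force)
  then show ?thesis using summable_on_iff_abs_summable_on_real by blast
qed

lemma summable_on_complex_comparison:
  fixes f :: "'i \<Rightarrow> complex" and g :: "'i \<Rightarrow> real"
  assumes "g summable_on A" "\<And>x. x \<in> A \<Longrightarrow> cmod (f x) \<le> g x"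
  shows "f summable_on A"
proof -
  have "(\<lambda>x. norm (g x)) summable_on A" using assms(1) summable_on_iff_abs_summable_on_real by blast
  then have "(\<lambda>x. norm (f x)) summable_on A"
    by (rule Infinite_Sum.abs_summable_on_comparison_test) (use assms in force)
  then show ?thesis using summable_on_iff_abs_summable_on_complex by blast
qed

lemma cmod_add_sq_le:
  fixes a b :: complex and e :: real
  assumes "e > 0"
  shows "(cmod (a + b))\<^sup>2 \<le> (1 + e) * (cmod a)\<^sup>2 + (1 + 1/e) * (cmod b)\<^sup>2"
proof -
  have "(cmod (a + b))\<^sup>2 \<le> (cmod a + cmod b)\<^sup>2"
    by (simp add: norm_triangle_ineq power_mono)
  also have "\<dots> \<le> (1 + e) * (cmod a)\<^sup>2 + (1 + 1/e) * (cmod b)\<^sup>2"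
  proof -
    have "0 \<le> (e * cmod a - cmod b)\<^sup>2 / e" using assms by simp
    also have "(e * cmod a - cmod b)\<^sup>2 / e = e * (cmod a)\<^sup>2 + (cmod b)\<^sup>2 / e - 2 * cmod a * cmod b"
      using assms by (simp add: field_simps power2_eq_square)
    finally show ?thesis using assms by (simp add: field_simps power2_eq_square)
  qed
  finally show ?thesis .
qed

context
  fixes w :: "'i \<Rightarrow> real"
  assumes w_nonneg: "\<And>i. 0 \<le> w i"
begin

lemma wnorm2_nonneg: "0 \<le> wnorm2 w g"
  unfolding wnorm2_def by (rule infsum_nonneg) (simp add: w_nonneg)

lemma wsummable_mono:
  assumes k: "wsummable w k" and le: "\<And>i. cmod (g i) \<le> cmod (k i)"
  shows "wsummable w g" "wnorm2 w g \<le> wnorm2 w k"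
proof -
  have le2: "w i * (cmod (g i))\<^sup>2 \<le> w i * (cmod (k i))\<^sup>2" for i
    using w_nonneg[of i] le[of i] by (simp add: mult_left_mono power_mono)
  show "wsummable w g" using k unfolding wsummable_def
    by (rule summable_on_real_comparison) (use w_nonneg le2 in auto)
  then show "wnorm2 w g \<le> wnorm2 w k" using k unfolding wsummable_def wnorm2_def
    by (intro infsum_mono) (use le2 in auto)
qed

lemma wsummable_lincomb:
  assumes g: "wsummable w g" and k: "wsummable w k"
  shows "wsummable w (\<lambda>i. a * g i + e * k i)"
proof -
  have pt: "w i * (cmod (a * g i + e * k i))\<^sup>2 \<le>
     2 * (cmod a)\<^sup>2 * (w i * (cmod (g i))\<^sup>2) + 2 * (cmod e)\<^sup>2 * (w i * (cmod (k i))\<^sup>2)" for i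
  proof -
    have "(cmod (a * g i + e * k i))\<^sup>2 \<le> (1 + 1) * (cmod (a * g i))\<^sup>2 + (1 + 1/1) * (cmod (e * k i))\<^sup>2"
      by (rule cmod_add_sq_le) simp
    then have "(cmod (a * g i + e * k i))\<^sup>2 \<le> 2 * (cmod a)\<^sup>2 * (cmod (g i))\<^sup>2 + 2 * (cmod e)\<^sup>2 * (cmod (k i))\<^sup>2"
      by (simp add: norm_mult power_mult_distrib)
    from mult_left_mono[OF this w_nonneg[of i]] show ?thesis by (simp add: algebra_simps)
  qed
  have "(\<lambda>i. 2 * (cmod a)\<^sup>2 * (w i * (cmod (g i))\<^sup>2) + 2 * (cmod e)\<^sup>2 * (w i * (cmod (k i))\<^sup>2)) summable_on UNIV"
    using g k unfolding wsummable_def by (intro summable_on_add summable_on_cmult_right)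
  then show ?thesis unfolding wsummable_def
    by (rule summable_on_real_comparison) (use w_nonneg pt in auto)
qed

lemma wnorm2_add_le:
  assumes g: "wsummable w g" and k: "wsummable w k" and e: "e > 0"
  shows "wnorm2 w (\<lambda>i. g i + k i) \<le> (1 + e) * wnorm2 w g + (1 + 1/e) * wnorm2 w k"
proof -
  have s: "wsummable w (\<lambda>i. g i + k i)" using wsummable_lincomb[OF g k, of 1 1] by simp
  have "wnorm2 w (\<lambda>i. g i + k i) \<le> (\<Sum>\<^sub>\<infinity>i. (1 + e) * (w i * (cmod (g i))\<^sup>2) + (1 + 1/e) * (w i * (cmod (k i))\<^sup>2))"
    unfolding wnorm2_def
  proof (rule infsum_mono)
    show "(\<lambda>i. w i * (cmod (g i + k i))\<^sup>2) summable_on UNIV" using s unfolding wsummable_def .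
    show "(\<lambda>i. (1 + e) * (w i * (cmod (g i))\<^sup>2) + (1 + 1/e) * (w i * (cmod (k i))\<^sup>2)) summable_on UNIV"
      using g k unfolding wsummable_def by (intro summable_on_add summable_on_cmult_right)
    fix i
    from mult_left_mono[OF cmod_add_sq_le[OF e, of "g i" "k i"] w_nonneg[of i]]
    show "w i * (cmod (g i + k i))\<^sup>2 \<le> (1 + e) * (w i * (cmod (g i))\<^sup>2) + (1 + 1/e) * (w i * (cmod (k i))\<^sup>2)"
      by (simp add: algebra_simps)
  qed
  also have "\<dots> = (1 + e) * wnorm2 w g + (1 + 1/e) * wnorm2 w k"
    using g k unfolding wsummable_def wnorm2_def
    by (subst infsum_add) (auto intro: summable_on_cmult_right simp: infsum_cmult_right)
  finally show ?thesis .
qed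

lemma wnorm2_scale:
  assumes g: "wsummable w g"
  shows "wnorm2 w (\<lambda>i. a * g i) = (cmod a)\<^sup>2 * wnorm2 w g"
proof -
  have "wnorm2 w (\<lambda>i. a * g i) = (\<Sum>\<^sub>\<infinity>i. (cmod a)\<^sup>2 * (w i * (cmod (g i))\<^sup>2))"
    unfolding wnorm2_def by (simp add: norm_mult power_mult_distrib algebra_simps)
  also have "\<dots> = (cmod a)\<^sup>2 * wnorm2 w g"
    unfolding wnorm2_def using g unfolding wsummable_def by (simp add: infsum_cmult_right)
  finally show ?thesis .
qed

lemma wnorm2_term_le:
  assumes g: "wsummable w g"
  shows "w i * (cmod (g i))\<^sup>2 \<le> wnorm2 w g"
proof -
  have "(\<Sum>\<^sub>\<infinity>j\<in>{i}. w j * (cmod (g j))\<^sup>2) \<le> wnorm2 w g"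
    unfolding wnorm2_def using g w_nonneg unfolding wsummable_def
    by (intro infsum_mono_neutral) auto
  then show ?thesis by simp
qed

lemma wnorm2_parallelogram:
  assumes g: "wsummable w g" and k: "wsummable w k"
  shows "wnorm2 w (\<lambda>i. g i + k i) + wnorm2 w (\<lambda>i. g i - k i) = 2 * wnorm2 w g + 2 * wnorm2 w k"
proof -
  have s1: "wsummable w (\<lambda>i. g i + k i)" using wsummable_lincomb[OF g k, of 1 1] by simp
  have s2: "wsummable w (\<lambda>i. g i - k i)" using wsummable_lincomb[OF g k, of 1 "-1"] by simp
  have pt: "w i * (cmod (g i + k i))\<^sup>2 + w i * (cmod (g i - k i))\<^sup>2
      = 2 * (w i * (cmod (g i))\<^sup>2) + 2 * (w i * (cmod (k i))\<^sup>2)" for i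
    unfolding cmod_power2 by (simp add: power2_eq_square algebra_simps)
  have "wnorm2 w (\<lambda>i. g i + k i) + wnorm2 w (\<lambda>i. g i - k i) =
        (\<Sum>\<^sub>\<infinity>i. w i * (cmod (g i + k i))\<^sup>2 + w i * (cmod (g i - k i))\<^sup>2)"
    using s1 s2 unfolding wnorm2_def wsummable_def by (simp add: infsum_add)
  also have "\<dots> = (\<Sum>\<^sub>\<infinity>i. 2 * (w i * (cmod (g i))\<^sup>2) + 2 * (w i * (cmod (k i))\<^sup>2))"
    by (simp only: pt)
  also have "\<dots> = 2 * wnorm2 w g + 2 * wnorm2 w k"
    using g k unfolding wnorm2_def wsummable_def
    by (subst infsum_add) (auto intro: summable_on_cmult_right simp: infsum_cmult_right)
  finally show ?thesis .
qed

lemma winner_summable: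
  assumes g: "wsummable w g" and k: "wsummable w k"
  shows "(\<lambda>i. complex_of_real (w i) * (g i * cnj (k i))) summable_on UNIV"
proof (rule summable_on_complex_comparison)
  show "(\<lambda>i. w i * (cmod (g i))\<^sup>2 + w i * (cmod (k i))\<^sup>2) summable_on UNIV"
    using g k unfolding wsummable_def by (rule summable_on_add)
  fix i
  have "0 \<le> cmod (g i) * cmod (k i)" by simp
  then have "cmod (g i) * cmod (k i) \<le> (cmod (g i))\<^sup>2 + (cmod (k i))\<^sup>2"
    using sum_squares_bound[of "cmod (g i)" "cmod (k i)"] by linarith
  from mult_left_mono[OF this w_nonneg[of i]]
  show "cmod (complex_of_real (w i) * (g i * cnj (k i))) \<le> w i * (cmod (g i))\<^sup>2 + w i * (cmod (k i))\<^sup>2"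
    using w_nonneg[of i] by (simp add: norm_mult algebra_simps)
qed

lemma wnorm2_expand:
  assumes g: "wsummable w g" and k: "wsummable w k"
  shows "wnorm2 w (\<lambda>i. g i - t * k i) = wnorm2 w g - 2 * Re (cnj t * winner w g k) + (cmod t)\<^sup>2 * wnorm2 w k"
proof -
  let ?X = "\<lambda>i. complex_of_real (w i) * (g i * cnj (k i))"
  have X: "?X summable_on UNIV" by (rule winner_summable[OF g k])
  have pt: "w i * (cmod (g i - t * k i))\<^sup>2 =
      (w i * (cmod (g i))\<^sup>2 + (cmod t)\<^sup>2 * (w i * (cmod (k i))\<^sup>2)) + (-2) * Re (cnj t * ?X i)" for i
    unfolding cmod_power2 by (simp add: power2_eq_square algebra_simps)
  have A: "(\<lambda>i. w i * (cmod (g i))\<^sup>2 + (cmod t)\<^sup>2 * (w i * (cmod (k i))\<^sup>2)) summable_on UNIV"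
    using g k unfolding wsummable_def by (intro summable_on_add summable_on_cmult_right)
  have R: "(\<lambda>i. Re (cnj t * ?X i)) summable_on UNIV"
    by (intro summable_on_Re summable_on_cmult_right X)
  have "wnorm2 w (\<lambda>i. g i - t * k i)
      = (\<Sum>\<^sub>\<infinity>i. w i * (cmod (g i))\<^sup>2 + (cmod t)\<^sup>2 * (w i * (cmod (k i))\<^sup>2)) + (\<Sum>\<^sub>\<infinity>i. (-2) * Re (cnj t * ?X i))"
    unfolding wnorm2_def pt by (rule infsum_add[OF A summable_on_cmult_right[OF R]])
  also have "(\<Sum>\<^sub>\<infinity>i. (-2) * Re (cnj t * ?X i)) = (-2) * (\<Sum>\<^sub>\<infinity>i. Re (cnj t * ?X i))"
    using R by (intro infsum_cmult_right) blast
  also have "(\<Sum>\<^sub>\<infinity>i. w i * (cmod (g i))\<^sup>2 + (cmod t)\<^sup>2 * (w i * (cmod (k i))\<^sup>2)) = wnorm2 w g + (cmod t)\<^sup>2 * wnorm2 w k"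
    using g k unfolding wsummable_def wnorm2_def
    by (subst infsum_add) (auto intro: summable_on_cmult_right simp: infsum_cmult_right)
  also have "(\<Sum>\<^sub>\<infinity>i. Re (cnj t * ?X i)) = Re (cnj t * winner w g k)"
  proof -
    have "(\<Sum>\<^sub>\<infinity>i. Re (cnj t * ?X i)) = Re (\<Sum>\<^sub>\<infinity>i. cnj t * ?X i)"
      by (rule infsum_Re[OF summable_on_cmult_right[OF X]])
    also have "(\<Sum>\<^sub>\<infinity>i. cnj t * ?X i) = cnj t * winner w g k"
      unfolding winner_def using X by (intro infsum_cmult_right) blast
    finally show ?thesis .
  qed
  finally show ?thesis by simp
qed

lemma winner_lincomb:
  assumes g: "wsummable w g" and k1: "wsummable w k1" and k2: "wsummable w k2"
  shows "winner w g (\<lambda>i. k1 i + a * k2 i) = winner w g k1 + cnj a * winner w g k2"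
proof -
  have X1: "(\<lambda>i. complex_of_real (w i) * (g i * cnj (k1 i))) summable_on UNIV" by (rule winner_summable[OF g k1])
  have X2: "(\<lambda>i. complex_of_real (w i) * (g i * cnj (k2 i))) summable_on UNIV" by (rule winner_summable[OF g k2])
  have "winner w g (\<lambda>i. k1 i + a * k2 i)
      = (\<Sum>\<^sub>\<infinity>i. complex_of_real (w i) * (g i * cnj (k1 i)) + cnj a * (complex_of_real (w i) * (g i * cnj (k2 i))))"
    unfolding winner_def by (rule infsum_cong) (simp add: algebra_simps)
  also have "\<dots> = winner w g k1 + cnj a * winner w g k2"
    unfolding winner_def using X1 X2 by (simp add: infsum_add summable_on_cmult_right infsum_cmult_right)
  finally show ?thesis .
qed

lemma wnorm2_fatou:
  assumes G: "\<And>n. wsummable w (G n)" "\<And>n. wnorm2 w (G n) \<le> K"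
    and lim: "\<And>i. (\<lambda>n. G n i) \<longlonglongrightarrow> L i"
  shows "wsummable w L" "wnorm2 w L \<le> K"
proof -
  have finite_sums: "sum (\<lambda>i. w i * (cmod (L i))\<^sup>2) F \<le> K" if "finite F" for F
  proof -
    have "(\<lambda>n. sum (\<lambda>i. w i * (cmod (G n i))\<^sup>2) F) \<longlonglongrightarrow> sum (\<lambda>i. w i * (cmod (L i))\<^sup>2) F"
      by (intro tendsto_intros lim)
    moreover have "sum (\<lambda>i. w i * (cmod (G n i))\<^sup>2) F \<le> K" for n
    proof -
      have "sum (\<lambda>i. w i * (cmod (G n i))\<^sup>2) F = (\<Sum>\<^sub>\<infinity>i\<in>F. w i * (cmod (G n i))\<^sup>2)" using that by simp
      also have "\<dots> \<le> wnorm2 w (G n)" unfolding wnorm2_def using G(1)[of n] w_nonneg that unfolding wsummable_def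
        by (intro infsum_mono_neutral) auto
      finally show ?thesis using G(2)[of n] by simp
    qed
    ultimately show ?thesis by (intro LIMSEQ_le_const2) auto
  qed
  show "wsummable w L" unfolding wsummable_def
    by (rule nonneg_bdd_above_summable_on) (use w_nonneg finite_sums in \<open>auto intro!: bdd_aboveI2\<close>)
  then show "wnorm2 w L \<le> K" unfolding wnorm2_def wsummable_def
    by (rule infsum_le_finite_sums) (use finite_sums in auto)
qed

lemma winner_Re_term_le:
  assumes g: "wsummable w g" and k: "wsummable w k" and pos: "\<And>i. 0 \<le> Re (g i * cnj (k i))"
  shows "w j * Re (g j * cnj (k j)) \<le> Re (winner w g k)"
proof -
  have X: "(\<lambda>i. complex_of_real (w i) * (g i * cnj (k i))) summable_on UNIV" by (rule winner_summable[OF g k])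
  have eq: "Re (winner w g k) = (\<Sum>\<^sub>\<infinity>i. w i * Re (g i * cnj (k i)))"
    unfolding winner_def infsum_Re[OF X, symmetric] by simp
  have S: "(\<lambda>i. w i * Re (g i * cnj (k i))) summable_on UNIV" using summable_on_Re[OF X] by simp
  have "(\<Sum>\<^sub>\<infinity>i\<in>{j}. w i * Re (g i * cnj (k i))) \<le> (\<Sum>\<^sub>\<infinity>i. w i * Re (g i * cnj (k i)))"
    using S w_nonneg pos by (intro infsum_mono_neutral) auto
  then show ?thesis using eq by simp
qed

end

definition dirac :: "'v \<Rightarrow> 'v \<Rightarrow> complex" where
  "dirac z = (\<lambda>x. if x = z then 1 else 0)"

lemma infsum_single_point:
  fixes f :: "'a \<Rightarrow> 'b::{comm_monoid_add, t2_space}"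
  assumes "\<And>x. x \<noteq> z \<Longrightarrow> f x = 0"
  shows "infsum f UNIV = f z" "f summable_on UNIV"
proof -
  have "infsum f UNIV = infsum f {z}" by (rule infsum_cong_neutral) (use assms in auto)
  then show "infsum f UNIV = f z" by simp
  have "f summable_on UNIV \<longleftrightarrow> f summable_on {z}" by (rule summable_on_cong_neutral) (use assms in auto)
  then show "f summable_on UNIV" by simp
qed

lemma wsummable_dirac: "wsummable w (dirac z)"
  unfolding wsummable_def by (rule infsum_single_point(2)[where z=z]) (simp add: dirac_def)

lemma winner_dirac: "winner w u (dirac z) = complex_of_real (w z) * u z"
proof -
  have "winner w u (dirac z) = (\<lambda>i. complex_of_real (w i) * (u i * cnj (dirac z i))) z"
    unfolding winner_def by (rule infsum_single_point(1)) (simp add: dirac_def)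
  then show ?thesis by (simp add: dirac_def)
qed

lemma summable_on_row:
  fixes g :: "'v \<Rightarrow> 'a::banach" and z :: 'w
  assumes "g summable_on UNIV"
  shows "(\<lambda>p. if fst p = z then g (snd p) else 0) summable_on UNIV"
        "(\<Sum>\<^sub>\<infinity>p. if fst p = z then g (snd p) else 0) = infsum g UNIV"
proof -
  let ?f = "\<lambda>p. if fst p = z then g (snd p) else 0"
  have inj: "inj_on (Pair z) UNIV" by (auto simp: inj_on_def)
  have e1: "?f summable_on UNIV \<longleftrightarrow> ?f summable_on range (Pair z)"
    by (rule summable_on_cong_neutral) auto
  have e2: "infsum ?f UNIV = infsum ?f (range (Pair z))"
    by (rule infsum_cong_neutral) auto
  have c: "?f \<circ> Pair z = g" by (rule ext) simp
  show "?f summable_on UNIV" using e1 summable_on_reindex[OF inj, of ?f] c assms by simp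
  show "infsum ?f UNIV = infsum g UNIV" using e2 infsum_reindex[OF inj, of ?f] c by simp
qed

lemma summable_on_column:
  fixes g :: "'v \<Rightarrow> 'a::banach" and z :: 'w
  assumes "g summable_on UNIV"
  shows "(\<lambda>p. if snd p = z then g (fst p) else 0) summable_on UNIV"
        "(\<Sum>\<^sub>\<infinity>p. if snd p = z then g (fst p) else 0) = infsum g UNIV"
proof -
  let ?f = "\<lambda>p. if fst p = z then g (snd p) else 0"
  have eq: "(\<lambda>p. if snd p = z then g (fst p) else 0) = (\<lambda>p. ?f (prod.swap p))" by auto
  have bij: "bij_betw prod.swap (UNIV :: ('v \<times> 'w) set) UNIV"
    by (rule bij_betwI[where g=prod.swap]) auto
  show "(\<lambda>p. if snd p = z then g (fst p) else 0) summable_on UNIV"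
    unfolding eq by (rule summable_on_reindex_bij_betw[OF bij, THEN iffD2, OF summable_on_row(1)[OF assms]])
  show "(\<Sum>\<^sub>\<infinity>p. if snd p = z then g (fst p) else 0) = infsum g UNIV"
    unfolding eq infsum_reindex_bij_betw[OF bij, of ?f] by (rule summable_on_row(2)[OF assms])
qed

text \<open>Square roots of quantities satisfying the \<open>\<epsilon>\<close>-triangle inequality satisfy the triangle
  inequality; this makes the square root of the form norm a seminorm.\<close>

lemma sqrt_triangle_if_eps_bound:
  fixes X A B :: real
  assumes A: "0 \<le> A" and B: "0 \<le> B" and H: "\<And>e. e > 0 \<Longrightarrow> X \<le> (1 + e) * A + (1 + 1/e) * B"
  shows "sqrt X \<le> sqrt A + sqrt B"
proof -
  define a \<beta> where "a = sqrt A" and "\<beta> = sqrt B"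
  have a: "0 \<le> a" "a\<^sup>2 = A" and \<beta>: "0 \<le> \<beta>" "\<beta>\<^sup>2 = B" using A B by (simp_all add: a_def \<beta>_def)
  have near: "X \<le> (a + \<beta>)\<^sup>2 + d * (a + \<beta>)" if d: "0 < d" for d
  proof -
    define e where "e = (\<beta> + d) / (a + d)"
    have e: "0 < e" using a \<beta> d by (simp add: e_def)
    have "(1 + e) * A = A + (\<beta> + d) * (a\<^sup>2 / (a + d))" using a by (simp add: e_def algebra_simps)
    also have "a\<^sup>2 / (a + d) \<le> a" using a d by (simp add: divide_le_eq power2_eq_square algebra_simps)
    then have "A + (\<beta> + d) * (a\<^sup>2 / (a + d)) \<le> A + (\<beta> + d) * a"
      by (intro add_left_mono mult_left_mono) (use \<beta> d in auto)
    finally have 1: "(1 + e) * A \<le> A + (\<beta> + d) * a" .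
    have "(1 + 1/e) * B = B + (a + d) * (\<beta>\<^sup>2 / (\<beta> + d))" using \<beta> a d by (simp add: e_def algebra_simps)
    also have "\<beta>\<^sup>2 / (\<beta> + d) \<le> \<beta>" using \<beta> d by (simp add: divide_le_eq power2_eq_square algebra_simps)
    then have "B + (a + d) * (\<beta>\<^sup>2 / (\<beta> + d)) \<le> B + (a + d) * \<beta>"
      by (intro add_left_mono mult_left_mono) (use a d in auto)
    finally have 2: "(1 + 1/e) * B \<le> B + (a + d) * \<beta>" .
    have "X \<le> (1 + e) * A + (1 + 1/e) * B" by (rule H[OF e])
    also have "\<dots> \<le> (a + \<beta>)\<^sup>2 + d * (a + \<beta>)"
      using 1 2 a \<beta> by (simp add: power2_sum algebra_simps)
    finally show ?thesis .
  qed
  have "X \<le> (a + \<beta>)\<^sup>2"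
  proof (rule field_le_epsilon)
    fix \<epsilon> :: real assume "0 < \<epsilon>"
    then have "X \<le> (a + \<beta>)\<^sup>2 + \<epsilon> / (a + \<beta> + 1) * (a + \<beta>)"
      using near[of "\<epsilon> / (a + \<beta> + 1)"] a \<beta> by simp
    also have "\<epsilon> / (a + \<beta> + 1) * (a + \<beta>) \<le> \<epsilon>"
      using \<open>0 < \<epsilon>\<close> a \<beta> by (simp add: divide_le_eq algebra_simps)
    finally show "X \<le> (a + \<beta>)\<^sup>2 + \<epsilon>" by simp
  qed
  then have "sqrt X \<le> sqrt ((a + \<beta>)\<^sup>2)" by (rule real_sqrt_le_mono)
  then show ?thesis using a \<beta> by (simp add: a_def \<beta>_def)
qed

text \<open>Used to dominate \<open>b(x,y) |u(x) - u(y)|\<close> by \<open>b(x,y) (1 + |u(x) - u(y)|\<^sup>2)\<close>.\<close>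

lemma le_one_plus_square: "(t::real) \<le> 1 + t\<^sup>2"
proof -
  have "0 \<le> (t - 1/2)\<^sup>2" by simp
  then show ?thesis by (simp add: power2_eq_square algebra_simps)
qed

text \<open>This is the first-order condition used twice below: once for minimisers, once against
  truncations.\<close>

lemma nonpos_if_quadratic_nonneg:
  fixes R Q :: real
  assumes quad: "\<And>s. 0 < s \<Longrightarrow> 2 * s * R \<le> s\<^sup>2 * Q"
  shows "R \<le> 0"
proof (rule ccontr)
  assume "\<not> R \<le> 0"
  then have R: "0 < R" by simp
  define s where "s = R / (\<bar>Q\<bar> + 1)"
  have s: "0 < s" using R by (simp add: s_def)
  have "s * (2 * R) \<le> s * (s * Q)" using quad[OF s] by (simp add: power2_eq_square algebra_simps)
  then have "2 * R \<le> s * Q" using s by simp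
  also have "s * Q \<le> s * \<bar>Q\<bar>" using s by (simp add: mult_left_mono)
  also have "s * \<bar>Q\<bar> < R" using R by (simp add: s_def field_simps)
  finally show False using R by simp
qed

lemma zero_if_quadratic_nonneg:
  fixes P :: complex and K :: real
  assumes quad: "\<And>t. 2 * Re (cnj t * P) \<le> (cmod t)\<^sup>2 * K"
  shows "P = 0"
proof -
  have "(cmod P)\<^sup>2 \<le> 0"
  proof (rule nonpos_if_quadratic_nonneg)
    fix s :: real assume "0 < s"
    have "cnj (complex_of_real s * P) * P = complex_of_real s * (P * cnj P)" by simp
    then have "Re (cnj (complex_of_real s * P) * P) = s * (cmod P)\<^sup>2"
      by (simp only: complex_norm_square[symmetric]) simp
    moreover have "(cmod (complex_of_real s * P))\<^sup>2 = s\<^sup>2 * (cmod P)\<^sup>2"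
      by (simp add: norm_mult power_mult_distrib)
    ultimately show "2 * s * (cmod P)\<^sup>2 \<le> s\<^sup>2 * ((cmod P)\<^sup>2 * K)"
      using quad[of "complex_of_real s * P"] by (simp add: algebra_simps)
  qed
  then show ?thesis by simp
qed

lemma convergent_if_sq_dist_le:
  fixes a :: "nat \<Rightarrow> complex"
  assumes M: "0 < M" and \<epsilon>: "\<epsilon> \<longlonglongrightarrow> 0" and H: "\<And>n k. M * (cmod (a n - a k))\<^sup>2 \<le> \<epsilon> n + \<epsilon> k"
  shows "convergent a"
proof -
  have "Cauchy a"
  proof (rule CauchyI)
    fix e :: real assume e: "0 < e"
    have "0 < M * e\<^sup>2 / 2" using M e by simp
    then obtain N where N: "\<And>n. N \<le> n \<Longrightarrow> \<bar>\<epsilon> n\<bar> < M * e\<^sup>2 / 2"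
      using \<epsilon> by (metis LIMSEQ_D real_norm_def diff_zero)
    show "\<exists>N. \<forall>m\<ge>N. \<forall>n\<ge>N. norm (a m - a n) < e"
    proof (intro exI allI impI)
      fix n k assume "N \<le> n" "N \<le> k"
      then have "M * (cmod (a n - a k))\<^sup>2 < M * e\<^sup>2" using H[of n k] N[of n] N[of k] by linarith
      then have "(cmod (a n - a k))\<^sup>2 < e\<^sup>2" using M by simp
      then show "norm (a n - a k) < e" using e by (simp add: power_less_imp_less_base)
    qed
  qed
  then show ?thesis by (simp add: Cauchy_convergent_iff)
qed

definition tol :: "nat \<Rightarrow> real" where "tol n = 1 / real (Suc n)"

lemma tol_pos: "0 < tol n" by (simp add: tol_def)
lemma tol_antimono: "n \<le> k \<Longrightarrow> tol k \<le> tol n" by (simp add: tol_def frac_le)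
lemma tol_tendsto: "tol \<longlonglongrightarrow> 0" unfolding tol_def by (rule LIMSEQ_inverse_real_of_nat[unfolded inverse_eq_divide])

text \<open>It is a normal contraction, and it
  is firmly nonexpansive, which makes \<open>Re ((a - a') \<cdot> conj (clip a - clip a')) \<ge> 0\<close>.\<close>

definition clip :: "real \<Rightarrow> complex \<Rightarrow> complex" where
  "clip r a = closest_point (cball 0 r) a"

lemma clip_props:
  assumes r: "0 \<le> r"
  shows clip_bound: "cmod (clip r a) \<le> r"
    and clip_self: "cmod a \<le> r \<Longrightarrow> clip r a = a"
    and clip_lipschitz: "cmod (clip r a - clip r a') \<le> cmod (a - a')"
    and clip_monotone: "0 \<le> Re ((a - a') * cnj (clip r a - clip r a'))"
proof -
  have cl: "closed (cball (0::complex) r)" and cv: "convex (cball (0::complex) r)"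
    and ne: "cball (0::complex) r \<noteq> {}" using r by auto
  show "cmod (clip r a) \<le> r" unfolding clip_def using closest_point_in_set[OF cl ne, of a] by simp
  show "cmod a \<le> r \<Longrightarrow> clip r a = a" unfolding clip_def by (intro closest_point_self) simp
  show "cmod (clip r a - clip r a') \<le> cmod (a - a')"
    using closest_point_lipschitz[OF cv cl ne, of a a'] unfolding clip_def by (simp add: dist_norm)
  have i1: "inner (a - clip r a) (clip r a' - clip r a) \<le> 0"
    unfolding clip_def by (rule closest_point_dot[OF cv cl]) (rule closest_point_in_set[OF cl ne])
  have i2: "inner (a' - clip r a') (clip r a - clip r a') \<le> 0"
    unfolding clip_def by (rule closest_point_dot[OF cv cl]) (rule closest_point_in_set[OF cl ne])
  have "inner (a - a') (clip r a - clip r a') = inner (clip r a - clip r a') (clip r a - clip r a')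
      - inner (a - clip r a) (clip r a' - clip r a) - inner (a' - clip r a') (clip r a - clip r a')"
    by (simp add: inner_diff_left inner_diff_right inner_commute)
  moreover have "0 \<le> inner (clip r a - clip r a') (clip r a - clip r a')" by simp
  ultimately have "0 \<le> inner (a - a') (clip r a - clip r a')" using i1 i2 by linarith
  moreover have "Re ((a - a') * cnj (clip r a - clip r a')) = inner (a - a') (clip r a - clip r a')"
    by (simp add: inner_complex_def algebra_simps)
  ultimately show "0 \<le> Re ((a - a') * cnj (clip r a - clip r a'))" by simp
qed

lemma clip_zero: "0 \<le> r \<Longrightarrow> clip r 0 = 0"
  using clip_self[of r 0] by simp

section \<open>The form norm of a graph\<close>

definition grad :: "('v \<Rightarrow> complex) \<Rightarrow> 'v \<times> 'v \<Rightarrow> complex" where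
  "grad f = (\<lambda>p. f (fst p) - f (snd p))"

definition edge_weight :: "('v \<Rightarrow> 'v \<Rightarrow> real) \<Rightarrow> 'v \<times> 'v \<Rightarrow> real" where
  "edge_weight b = (\<lambda>p. b (fst p) (snd p))"

definition form_dom :: "('v \<Rightarrow> real) \<Rightarrow> ('v \<Rightarrow> 'v \<Rightarrow> real) \<Rightarrow> ('v \<Rightarrow> real) \<Rightarrow> ('v \<Rightarrow> complex) \<Rightarrow> bool" where
  "form_dom m b c f \<longleftrightarrow> wsummable m f \<and> wsummable (edge_weight b) (grad f) \<and> wsummable c f"

definition form_norm2 :: "('v \<Rightarrow> real) \<Rightarrow> ('v \<Rightarrow> 'v \<Rightarrow> real) \<Rightarrow> ('v \<Rightarrow> real) \<Rightarrow> ('v \<Rightarrow> complex) \<Rightarrow> real" where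
  "form_norm2 m b c f = 1/2 * wnorm2 (edge_weight b) (grad f) + wnorm2 c f + wnorm2 m f"

definition form_inner :: "('v \<Rightarrow> real) \<Rightarrow> ('v \<Rightarrow> 'v \<Rightarrow> real) \<Rightarrow> ('v \<Rightarrow> real)
    \<Rightarrow> ('v \<Rightarrow> complex) \<Rightarrow> ('v \<Rightarrow> complex) \<Rightarrow> complex" where
  "form_inner m b c f g = 1/2 * winner (edge_weight b) (grad f) (grad g) + winner c f g + winner m f g"

lemma grad_lincomb: "grad (\<lambda>x. a * f x + e * g x) = (\<lambda>p. a * grad f p + e * grad g p)"
  by (rule ext) (simp add: grad_def algebra_simps)

locale graph =
  fixes m :: "'v \<Rightarrow> real" and b :: "'v \<Rightarrow> 'v \<Rightarrow> real" and c :: "'v \<Rightarrow> real"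
  assumes is_graph: "is_graph m b c"
begin

abbreviation "D \<equiv> form_dom m b c"
abbreviation "q \<equiv> form_norm2 m b c"
abbreviation "B \<equiv> form_inner m b c"

lemma m_pos: "0 < m x" using is_graph unfolding is_graph_def by blast
lemma m_nonneg: "0 \<le> m x" using m_pos[of x] by simp
lemma c_nonneg: "0 \<le> c x" using is_graph unfolding is_graph_def by blast
lemma b_nonneg: "0 \<le> b x y" using is_graph unfolding is_graph_def by blast
lemma edge_weight_nonneg: "0 \<le> edge_weight b p" using b_nonneg by (simp add: edge_weight_def)
lemma b_diag: "b x x = 0" using is_graph unfolding is_graph_def by blast
lemma b_sym: "b x y = b y x" using is_graph unfolding is_graph_def by blast
lemma b_summable: "(\<lambda>y. b x y) summable_on UNIV" using is_graph unfolding is_graph_def by blast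
lemma b_summable_col: "(\<lambda>x. b x z) summable_on UNIV" using b_summable[of z] by (simp add: b_sym)

lemma QN_dom_iff: "u \<in> QN_dom m b c \<longleftrightarrow> D u"
proof -
  have "(\<lambda>(x, y). b x y * (cmod (u x - u y))\<^sup>2) = (\<lambda>i. edge_weight b i * (cmod (grad u i))\<^sup>2)"
    by (rule ext) (simp add: edge_weight_def grad_def case_prod_unfold)
  then show ?thesis unfolding QN_dom_def l2_def form_dom_def wsummable_def by (simp add: mult.commute)
qed

lemma QN_plus_l2_norm_sq: "QN b c u + l2_norm_sq m u = q u"
proof -
  have "(\<lambda>(x, y). b x y * (cmod (u x - u y))\<^sup>2) = (\<lambda>i. edge_weight b i * (cmod (grad u i))\<^sup>2)"
    by (rule ext) (simp add: edge_weight_def grad_def case_prod_unfold)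
  then show ?thesis unfolding QN_def l2_norm_sq_def form_norm2_def wnorm2_def by (simp add: mult.commute)
qed

lemma D_lincomb: "D f \<Longrightarrow> D g \<Longrightarrow> D (\<lambda>x. a * f x + e * g x)"
  unfolding form_dom_def grad_lincomb
  using wsummable_lincomb[of m, OF m_nonneg] wsummable_lincomb[of "edge_weight b", OF edge_weight_nonneg]
    wsummable_lincomb[of c, OF c_nonneg] by blast

lemma D_diff: "D f \<Longrightarrow> D g \<Longrightarrow> D (\<lambda>x. f x - g x)"
  using D_lincomb[of f g 1 "-1"] by simp
lemma D_add: "D f \<Longrightarrow> D g \<Longrightarrow> D (\<lambda>x. f x + g x)"
  using D_lincomb[of f g 1 1] by simp
lemma D_scale: "D f \<Longrightarrow> D (\<lambda>x. a * f x)"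
  using D_lincomb[of f f a 0] by simp
lemma D_zero: "D (\<lambda>x. 0)"
  by (simp add: form_dom_def wsummable_def grad_def)

lemma q_nonneg: "0 \<le> q f"
  unfolding form_norm2_def
  using wnorm2_nonneg[of "edge_weight b", OF edge_weight_nonneg] wnorm2_nonneg[of c, OF c_nonneg]
    wnorm2_nonneg[of m, OF m_nonneg] by (simp add: add_nonneg_nonneg)

text \<open>Convergence in the form norm implies pointwise convergence.\<close>

lemma q_term_le: "D f \<Longrightarrow> m x * (cmod (f x))\<^sup>2 \<le> q f"
  unfolding form_norm2_def form_dom_def
  using wnorm2_term_le[of m, OF m_nonneg, of f x] wnorm2_nonneg[of "edge_weight b", OF edge_weight_nonneg, of "grad f"]
    wnorm2_nonneg[of c, OF c_nonneg, of f] by linarith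

lemma q_scale: "D f \<Longrightarrow> q (\<lambda>x. a * f x) = (cmod a)\<^sup>2 * q f"
  using grad_lincomb[of a f 0 f] unfolding form_norm2_def form_dom_def
  by (simp add: wnorm2_scale m_nonneg c_nonneg edge_weight_nonneg algebra_simps)

lemma q_zero: "q (\<lambda>x. 0) = 0"
  by (simp add: form_norm2_def wnorm2_def grad_def)

lemma q_minus_commute: "D f \<Longrightarrow> D g \<Longrightarrow> q (\<lambda>x. g x - f x) = q (\<lambda>x. f x - g x)"
  using q_scale[OF D_diff, of f g "-1"] by simp

lemma q_parallelogram: "D f \<Longrightarrow> D g \<Longrightarrow> q (\<lambda>x. f x + g x) + q (\<lambda>x. f x - g x) = 2 * q f + 2 * q g"
  using grad_lincomb[of 1 f 1 g] grad_lincomb[of 1 f "-1" g]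
    wnorm2_parallelogram[of "edge_weight b", OF edge_weight_nonneg, of "grad f" "grad g"]
    wnorm2_parallelogram[of c, OF c_nonneg, of f g] wnorm2_parallelogram[of m, OF m_nonneg, of f g]
  unfolding form_norm2_def form_dom_def by (simp add: algebra_simps)

lemma q_add_le:
  assumes f: "D f" and g: "D g" and e: "e > 0"
  shows "q (\<lambda>x. f x + g x) \<le> (1 + e) * q f + (1 + 1/e) * q g"
proof -
  have E: "wnorm2 (edge_weight b) (grad (\<lambda>x. f x + g x))
      \<le> (1 + e) * wnorm2 (edge_weight b) (grad f) + (1 + 1/e) * wnorm2 (edge_weight b) (grad g)"
    using grad_lincomb[of 1 f 1 g] f g e unfolding form_dom_def
    by (simp add: wnorm2_add_le edge_weight_nonneg)
  have K: "wnorm2 c (\<lambda>x. f x + g x) \<le> (1 + e) * wnorm2 c f + (1 + 1/e) * wnorm2 c g"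
    using f g e unfolding form_dom_def by (simp add: wnorm2_add_le c_nonneg)
  have M: "wnorm2 m (\<lambda>x. f x + g x) \<le> (1 + e) * wnorm2 m f + (1 + 1/e) * wnorm2 m g"
    using f g e unfolding form_dom_def by (simp add: wnorm2_add_le m_nonneg)
  have "q (\<lambda>x. f x + g x) = 1/2 * wnorm2 (edge_weight b) (grad (\<lambda>x. f x + g x))
      + wnorm2 c (\<lambda>x. f x + g x) + wnorm2 m (\<lambda>x. f x + g x)"
    by (simp add: form_norm2_def)
  also have "\<dots> \<le> 1/2 * ((1 + e) * wnorm2 (edge_weight b) (grad f) + (1 + 1/e) * wnorm2 (edge_weight b) (grad g))
        + ((1 + e) * wnorm2 c f + (1 + 1/e) * wnorm2 c g) + ((1 + e) * wnorm2 m f + (1 + 1/e) * wnorm2 m g)"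
    using E K M by (simp add: add_mono)
  also have "\<dots> = (1 + e) * q f + (1 + 1/e) * q g"
    unfolding form_norm2_def using e by (simp add: field_simps)
  finally show ?thesis .
qed

lemma q_triangle: "D f \<Longrightarrow> D g \<Longrightarrow> sqrt (q (\<lambda>x. f x + g x)) \<le> sqrt (q f) + sqrt (q g)"
  by (rule sqrt_triangle_if_eps_bound[OF q_nonneg q_nonneg]) (rule q_add_le)

lemma q_expand:
  assumes f: "D f" and g: "D g"
  shows "q (\<lambda>x. f x - t * g x) = q f - 2 * Re (cnj t * B f g) + (cmod t)\<^sup>2 * q g"
proof -
  have grad_eq: "grad (\<lambda>x. f x - t * g x) = (\<lambda>p. grad f p - t * grad g p)"
    using grad_lincomb[of 1 f "-t" g] by simp
  have E: "wnorm2 (edge_weight b) (\<lambda>p. grad f p - t * grad g p) = wnorm2 (edge_weight b) (grad f)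
      - 2 * Re (cnj t * winner (edge_weight b) (grad f) (grad g)) + (cmod t)\<^sup>2 * wnorm2 (edge_weight b) (grad g)"
    using f g unfolding form_dom_def by (intro wnorm2_expand edge_weight_nonneg) auto
  have K: "wnorm2 c (\<lambda>x. f x - t * g x) = wnorm2 c f - 2 * Re (cnj t * winner c f g) + (cmod t)\<^sup>2 * wnorm2 c g"
    using f g unfolding form_dom_def by (intro wnorm2_expand c_nonneg) auto
  have M: "wnorm2 m (\<lambda>x. f x - t * g x) = wnorm2 m f - 2 * Re (cnj t * winner m f g) + (cmod t)\<^sup>2 * wnorm2 m g"
    using f g unfolding form_dom_def by (intro wnorm2_expand m_nonneg) auto
  have "Re (cnj t * B f g) = 1/2 * Re (cnj t * winner (edge_weight b) (grad f) (grad g))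
      + Re (cnj t * winner c f g) + Re (cnj t * winner m f g)"
    unfolding form_inner_def by (simp add: algebra_simps)
  then show ?thesis unfolding form_norm2_def grad_eq E K M by (simp add: algebra_simps)
qed

lemma B_lincomb: "D f \<Longrightarrow> D g1 \<Longrightarrow> D g2 \<Longrightarrow> B f (\<lambda>x. g1 x + a * g2 x) = B f g1 + cnj a * B f g2"
  using grad_lincomb[of 1 g1 a g2]
    winner_lincomb[of "edge_weight b", OF edge_weight_nonneg, of "grad f" "grad g1" "grad g2" a]
    winner_lincomb[of c, OF c_nonneg, of f g1 g2 a] winner_lincomb[of m, OF m_nonneg, of f g1 g2 a]
  unfolding form_inner_def form_dom_def by (simp add: algebra_simps)

lemma B_zero: "B f (\<lambda>x. 0) = 0"
  by (simp add: form_inner_def winner_def grad_def)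

text \<open>Lower semicontinuity of the form norm under pointwise convergence (with a crude
  constant, which suffices).\<close>

lemma q_fatou:
  assumes G: "\<And>n. D (G n)" "\<And>n. q (G n) \<le> K" and lim: "\<And>x. (\<lambda>n. G n x) \<longlonglongrightarrow> L x"
  shows "D L" "q L \<le> 3 * K"
proof -
  have bound: "wnorm2 (edge_weight b) (grad (G n)) \<le> 2 * K" "wnorm2 c (G n) \<le> K" "wnorm2 m (G n) \<le> K" for n
    using G(2)[of n] wnorm2_nonneg[of "edge_weight b", OF edge_weight_nonneg, of "grad (G n)"]
      wnorm2_nonneg[of c, OF c_nonneg, of "G n"] wnorm2_nonneg[of m, OF m_nonneg, of "G n"]
    unfolding form_norm2_def by auto
  have grad_lim: "(\<lambda>n. grad (G n) p) \<longlonglongrightarrow> grad L p" for p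
    unfolding grad_def by (intro tendsto_diff lim)
  have e: "wsummable (edge_weight b) (grad L)" "wnorm2 (edge_weight b) (grad L) \<le> 2 * K"
    using wnorm2_fatou[of "edge_weight b", OF edge_weight_nonneg, of "\<lambda>n. grad (G n)" "2 * K"] G(1) bound grad_lim
    unfolding form_dom_def by auto
  have k: "wsummable c L" "wnorm2 c L \<le> K"
    using wnorm2_fatou[of c, OF c_nonneg, of G K L] G(1) bound lim unfolding form_dom_def by auto
  have n: "wsummable m L" "wnorm2 m L \<le> K"
    using wnorm2_fatou[of m, OF m_nonneg, of G K L] G(1) bound lim unfolding form_dom_def by auto
  show "D L" using e k n unfolding form_dom_def by auto
  show "q L \<le> 3 * K" using e k n unfolding form_norm2_def by auto
qed

lemma q_continuous:
  assumes F: "\<And>n. D (F n)" and L: "D L" and lim: "(\<lambda>n. q (\<lambda>x. F n x - L x)) \<longlonglongrightarrow> 0"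
  shows "(\<lambda>n. q (F n)) \<longlonglongrightarrow> q L"
proof -
  let ?s = "\<lambda>n. sqrt (q (\<lambda>x. F n x - L x))"
  have s0: "?s \<longlonglongrightarrow> 0" using tendsto_real_sqrt[OF lim] by simp
  have up: "sqrt (q (F n)) \<le> sqrt (q L) + ?s n" for n
  proof -
    have "sqrt (q (\<lambda>x. L x + (F n x - L x))) \<le> sqrt (q L) + ?s n"
      by (rule q_triangle[OF L D_diff[OF F L]])
    then show ?thesis by simp
  qed
  have lo: "sqrt (q L) - ?s n \<le> sqrt (q (F n))" for n
  proof -
    have "sqrt (q (\<lambda>x. F n x + (L x - F n x))) \<le> sqrt (q (F n)) + sqrt (q (\<lambda>x. L x - F n x))"
      by (rule q_triangle[OF F D_diff[OF L F]])
    then show ?thesis using q_minus_commute[OF F L] by simp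
  qed
  have "(\<lambda>n. sqrt (q (F n))) \<longlonglongrightarrow> sqrt (q L)"
  proof (rule tendsto_sandwich[of "\<lambda>n. sqrt (q L) - ?s n" _ _ "\<lambda>n. sqrt (q L) + ?s n"])
    show "(\<lambda>n. sqrt (q L) - ?s n) \<longlonglongrightarrow> sqrt (q L)" using tendsto_diff[OF tendsto_const s0] by simp
    show "(\<lambda>n. sqrt (q L) + ?s n) \<longlonglongrightarrow> sqrt (q L)" using tendsto_add[OF tendsto_const s0] by simp
  qed (use lo up in auto)
  from tendsto_power[OF this, of 2] show ?thesis using q_nonneg by simp
qed

end

section \<open>The discrete Green formula and 1-harmonic functions\<close>

context graph
begin

lemma edge_term_summable: "D u \<Longrightarrow> (\<lambda>y. b z y * (cmod (u z - u y))\<^sup>2) summable_on UNIV"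
proof -
  assume "D u"
  then have "(\<lambda>p. edge_weight b p * (cmod (grad u p))\<^sup>2) summable_on UNIV"
    unfolding form_dom_def wsummable_def by simp
  then have "(\<lambda>p. edge_weight b p * (cmod (grad u p))\<^sup>2) summable_on range (Pair z)"
    by (rule summable_on_subset_banach) auto
  moreover have "inj_on (Pair z) UNIV" by (simp add: inj_on_def)
  ultimately have "((\<lambda>p. edge_weight b p * (cmod (grad u p))\<^sup>2) \<circ> Pair z) summable_on UNIV"
    using summable_on_reindex by blast
  then show ?thesis by (simp add: comp_def edge_weight_def grad_def)
qed

text \<open>On \<open>D(Q\<^sup>N)\<close> the sums defining \<open>\<widetilde>L\<close> converge absolutely; the key estimate is
  \<open>b(x,y) |t| \<le> b(x,y) (1 + t\<^sup>2)\<close> together with \<open>\<Sum>\<^sub>y b(x,y) < \<infinity>\<close>.\<close>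

lemma laplace_term_summable: "D u \<Longrightarrow> (\<lambda>y. complex_of_real (b z y) * (u z - u y)) summable_on UNIV"
proof -
  assume u: "D u"
  show ?thesis
  proof (rule summable_on_complex_comparison)
    show "(\<lambda>y. b z y + b z y * (cmod (u z - u y))\<^sup>2) summable_on UNIV"
      by (intro summable_on_add b_summable edge_term_summable[OF u])
    fix y
    from mult_left_mono[OF le_one_plus_square b_nonneg]
    show "cmod (complex_of_real (b z y) * (u z - u y)) \<le> b z y + b z y * (cmod (u z - u y))\<^sup>2"
      using b_nonneg[of z y] by (simp add: norm_mult distrib_left)
  qed
qed

lemma form_dom_subset_Ftilde: "D u \<Longrightarrow> u \<in> Ftilde b"
  unfolding Ftilde_def
proof safe
  fix x assume u: "D u"
  show "(\<lambda>y. cmod (complex_of_real (b x y) * u y)) summable_on UNIV"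
  proof (rule summable_on_real_comparison)
    show "(\<lambda>y. (cmod (u x) + 1) * b x y + b x y * (cmod (u x - u y))\<^sup>2) summable_on UNIV"
      by (intro summable_on_add summable_on_cmult_right b_summable edge_term_summable[OF u])
    fix y
    have "cmod (u y) \<le> cmod (u x) + cmod (u x - u y)"
      by (metis norm_minus_commute norm_triangle_sub)
    also have "\<dots> \<le> cmod (u x) + (1 + (cmod (u x - u y))\<^sup>2)"
      using le_one_plus_square by simp
    finally have "b x y * cmod (u y) \<le> b x y * (cmod (u x) + (1 + (cmod (u x - u y))\<^sup>2))"
      by (intro mult_left_mono b_nonneg)
    then show "cmod (complex_of_real (b x y) * u y) \<le> (cmod (u x) + 1) * b x y + b x y * (cmod (u x - u y))\<^sup>2"
      using b_nonneg[of x y] by (simp add: norm_mult algebra_simps)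
  qed simp
qed

lemma form_dom_dirac: "D (dirac z)"
proof -
  have "(\<lambda>p. edge_weight b p * (cmod (grad (dirac z) p))\<^sup>2) summable_on UNIV"
  proof (rule summable_on_real_comparison)
    show "(\<lambda>p. (if fst p = z then b z (snd p) else 0) + (if snd p = z then b (fst p) z else 0)) summable_on UNIV"
      by (intro summable_on_add summable_on_row(1) summable_on_column(1) b_summable b_summable_col)
    fix p :: "'v \<times> 'v"
    show "0 \<le> edge_weight b p * (cmod (grad (dirac z) p))\<^sup>2" using edge_weight_nonneg[of p] by simp
    show "edge_weight b p * (cmod (grad (dirac z) p))\<^sup>2
        \<le> (if fst p = z then b z (snd p) else 0) + (if snd p = z then b (fst p) z else 0)"
      using b_nonneg[of "fst p" "snd p"] b_diag[of z] by (cases p) (auto simp: edge_weight_def grad_def dirac_def)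
  qed
  then show ?thesis unfolding form_dom_def using wsummable_dirac[of m z] wsummable_dirac[of c z]
    by (simp add: wsummable_def)
qed

text \<open>Both the row and the column of \<open>z\<close> in the edge sum contribute \<open>\<Sum>\<^sub>y b(z,y) (u(z) - u(y))\<close>,
  which cancels the factor \<open>1/2\<close>.\<close>

lemma green_formula:
  assumes u: "D u"
  shows "B u (dirac z) = complex_of_real (m z) * (Ltilde m b c u z + u z)"
proof -
  define S where "S = (\<Sum>\<^sub>\<infinity>y. complex_of_real (b z y) * (u z - u y))"
  have row: "(\<lambda>y. complex_of_real (b z y) * (u z - u y)) summable_on UNIV"
    by (rule laplace_term_summable[OF u])
  then have col: "(\<lambda>x. complex_of_real (b x z) * (u z - u x)) summable_on UNIV"
    by (simp add: b_sym)
  let ?A = "\<lambda>p. if fst p = z then complex_of_real (b z (snd p)) * (u z - u (snd p)) else 0"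
  let ?A' = "\<lambda>p. if snd p = z then complex_of_real (b (fst p) z) * (u z - u (fst p)) else 0"
  have split: "complex_of_real (edge_weight b p) * (grad u p * cnj (grad (dirac z) p)) = ?A p + ?A' p" for p
    using b_diag[of z] by (cases p) (auto simp: edge_weight_def grad_def dirac_def algebra_simps)
  have "winner (edge_weight b) (grad u) (grad (dirac z)) = infsum ?A UNIV + infsum ?A' UNIV"
    unfolding winner_def split by (rule infsum_add[OF summable_on_row(1)[OF row] summable_on_column(1)[OF col]])
  also have "\<dots> = 2 * S"
    unfolding S_def summable_on_row(2)[OF row] summable_on_column(2)[OF col] by (simp add: b_sym)
  finally have "B u (dirac z) = S + complex_of_real (c z) * u z + complex_of_real (m z) * u z"
    unfolding form_inner_def winner_dirac by simp
  moreover have "Ltilde m b c u z = complex_of_real (1 / m z) * S + complex_of_real (c z / m z) * u z"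
    unfolding Ltilde_def S_def by simp
  moreover have "m z \<noteq> 0" using m_pos[of z] by simp
  ultimately show ?thesis by (simp add: field_simps)
qed

lemma finsupp_eq_sum_dirac:
  assumes "\<phi> \<in> finsupp"
  shows "\<phi> = (\<lambda>x. \<Sum>z\<in>{x. \<phi> x \<noteq> 0}. \<phi> z * dirac z x)"
proof
  fix x
  have "(\<Sum>z\<in>{x. \<phi> x \<noteq> 0}. \<phi> z * dirac z x) = (\<Sum>z\<in>{x. \<phi> x \<noteq> 0}. if z = x then \<phi> z else 0)"
    by (rule sum.cong) (auto simp: dirac_def)
  also have "\<dots> = \<phi> x" using assms by (simp add: finsupp_def sum.delta)
  finally show "\<phi> x = (\<Sum>z\<in>{x. \<phi> x \<noteq> 0}. \<phi> z * dirac z x)" by simp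
qed

lemma form_inner_sum_dirac:
  assumes u: "D u" and F: "finite F"
  shows "D (\<lambda>x. \<Sum>z\<in>F. a z * dirac z x) \<and> B u (\<lambda>x. \<Sum>z\<in>F. a z * dirac z x) = (\<Sum>z\<in>F. cnj (a z) * B u (dirac z))"
  using F
proof (induction F rule: finite_induct)
  case empty
  then show ?case using D_zero B_zero by simp
next
  case (insert y F)
  let ?g = "\<lambda>x. \<Sum>z\<in>F. a z * dirac z x"
  have eq: "(\<lambda>x. \<Sum>z\<in>insert y F. a z * dirac z x) = (\<lambda>x. ?g x + a y * dirac y x)"
    using insert by (simp add: algebra_simps)
  have g: "D ?g" using insert by simp
  show ?case unfolding eq
    using D_lincomb[OF g form_dom_dirac, of 1 "a y"] B_lincomb[OF u g form_dom_dirac, of "a y"] insert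
    by (simp add: algebra_simps)
qed

lemma finsupp_lincomb: "\<phi> \<in> finsupp \<Longrightarrow> \<psi> \<in> finsupp \<Longrightarrow> (\<lambda>x. a * \<phi> x + e * \<psi> x) \<in> finsupp"
  unfolding finsupp_def by (auto intro: finite_subset[of _ "{x. \<phi> x \<noteq> 0} \<union> {x. \<psi> x \<noteq> 0}"])

lemma finsupp_form_dom: "\<phi> \<in> finsupp \<Longrightarrow> D \<phi>"
  using finsupp_eq_sum_dirac[of \<phi>] form_inner_sum_dirac[OF D_zero, of "{x. \<phi> x \<noteq> 0}" \<phi>]
  by (simp add: finsupp_def)

definition one_harmonic :: "('v \<Rightarrow> complex) \<Rightarrow> bool" where
  "one_harmonic u \<longleftrightarrow> D u \<and> (\<forall>x. Ltilde m b c u x + u x = 0)"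

text \<open>By Green's formula, 1-harmonic functions are \<open>B\<close>-orthogonal to \<open>C\<^sub>c(V)\<close> ...\<close>

lemma one_harmonic_orthogonal_finsupp:
  assumes h: "one_harmonic u" and \<phi>: "\<phi> \<in> finsupp"
  shows "B u \<phi> = 0"
proof -
  have u: "D u" using h by (simp add: one_harmonic_def)
  have "B u \<phi> = (\<Sum>z\<in>{x. \<phi> x \<noteq> 0}. cnj (\<phi> z) * B u (dirac z))"
    using finsupp_eq_sum_dirac[OF \<phi>] form_inner_sum_dirac[OF u, of "{x. \<phi> x \<noteq> 0}" \<phi>] \<phi>
    by (simp add: finsupp_def)
  also have "\<dots> = 0" using h green_formula[OF u] by (simp add: one_harmonic_def)
  finally show ?thesis .
qed

text \<open>... hence they minimise the form norm on their coset \<open>u + C\<^sub>c(V)\<close> ...\<close>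

lemma one_harmonic_le_finsupp:
  assumes h: "one_harmonic u" and \<phi>: "\<phi> \<in> finsupp"
  shows "q u \<le> q (\<lambda>x. u x - \<phi> x)"
proof -
  have u: "D u" using h by (simp add: one_harmonic_def)
  have "q (\<lambda>x. u x - 1 * \<phi> x) = q u - 2 * Re (cnj 1 * B u \<phi>) + (cmod 1)\<^sup>2 * q \<phi>"
    by (rule q_expand[OF u finsupp_form_dom[OF \<phi>]])
  then show ?thesis using one_harmonic_orthogonal_finsupp[OF h \<phi>] q_nonneg[of \<phi>] by simp
qed

text \<open>Conversely, a local minimiser of the form norm on \<open>u + C\<^sub>c(V)\<close> is 1-harmonic: minimality against
  \<open>t \<delta>\<^sub>z\<close> for all \<open>t \<in> \<complex>\<close> forces \<open>B(u, \<delta>\<^sub>z) = 0\<close>.\<close>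

lemma one_harmonic_if_minimal:
  assumes u: "D u" and min: "\<And>\<psi>. \<psi> \<in> finsupp \<Longrightarrow> q u \<le> q (\<lambda>x. u x - \<psi> x)"
  shows "one_harmonic u"
  unfolding one_harmonic_def
proof (intro conjI allI u)
  fix z
  have "B u (dirac z) = 0"
  proof (rule zero_if_quadratic_nonneg)
    fix t
    have "(\<lambda>x. t * dirac z x) \<in> finsupp"
      unfolding finsupp_def dirac_def by (auto intro: finite_subset[of _ "{z}"])
    then have "q u \<le> q (\<lambda>x. u x - t * dirac z x)" by (rule min)
    also have "\<dots> = q u - 2 * Re (cnj t * B u (dirac z)) + (cmod t)\<^sup>2 * q (dirac z)"
      by (rule q_expand[OF u form_dom_dirac])
    finally show "2 * Re (cnj t * B u (dirac z)) \<le> (cmod t)\<^sup>2 * q (dirac z)" by simp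
  qed
  then have "complex_of_real (m z) * (Ltilde m b c u z + u z) = 0"
    using green_formula[OF u, of z] by simp
  then show "Ltilde m b c u z + u z = 0" using m_pos[of z] by simp
qed

lemma QD_dom_iff:
  "v \<in> QD_dom m b c \<longleftrightarrow> D v \<and> (\<exists>\<phi>. (\<forall>n. \<phi> n \<in> finsupp \<and> D (\<lambda>x. v x - \<phi> n x)) \<and> (\<lambda>n. q (\<lambda>x. v x - \<phi> n x)) \<longlonglongrightarrow> 0)"
  unfolding QD_dom_def by (simp add: QN_dom_iff QN_plus_l2_norm_sq)

lemma QD_dom_intro:
  assumes "D v" "\<And>n. \<phi> n \<in> finsupp" "(\<lambda>n. q (\<lambda>x. v x - \<phi> n x)) \<longlonglongrightarrow> 0"
  shows "v \<in> QD_dom m b c"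
  unfolding QD_dom_iff using assms D_diff[OF \<open>D v\<close> finsupp_form_dom] by blast

lemma QD_dom_scale:
  assumes v: "v \<in> QD_dom m b c"
  shows "(\<lambda>x. a * v x) \<in> QD_dom m b c"
proof -
  obtain \<phi> where \<phi>: "\<And>n. \<phi> n \<in> finsupp" "\<And>n. D (\<lambda>x. v x - \<phi> n x)"
    and lim: "(\<lambda>n. q (\<lambda>x. v x - \<phi> n x)) \<longlonglongrightarrow> 0"
    using v unfolding QD_dom_iff by blast
  have eq: "(\<lambda>x. a * v x - a * \<phi> n x) = (\<lambda>x. a * (v x - \<phi> n x))" for n
    by (simp add: algebra_simps)
  show ?thesis
  proof (rule QD_dom_intro[of _ "\<lambda>n x. a * \<phi> n x"])
    show "D (\<lambda>x. a * v x)" using v by (simp add: QD_dom_iff D_scale)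
    show "(\<lambda>x. a * \<phi> n x) \<in> finsupp" for n
      using \<phi>(1)[of n] unfolding finsupp_def by (auto intro: finite_subset[rotated])
    have "(\<lambda>n. (cmod a)\<^sup>2 * q (\<lambda>x. v x - \<phi> n x)) \<longlonglongrightarrow> (cmod a)\<^sup>2 * 0"
      by (intro tendsto_mult tendsto_const lim)
    then show "(\<lambda>n. q (\<lambda>x. a * v x - a * \<phi> n x)) \<longlonglongrightarrow> 0"
      unfolding eq using q_scale[OF \<phi>(2)] by simp
  qed
qed

text \<open>... and, by continuity of the form norm, on their coset \<open>u + D(Q\<^sup>D)\<close>.\<close>

lemma one_harmonic_le_QD:
  assumes h: "one_harmonic u" and v: "v \<in> QD_dom m b c"
  shows "q u \<le> q (\<lambda>x. u x - v x)"
proof -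
  have u: "D u" using h by (simp add: one_harmonic_def)
  obtain \<phi> where \<phi>: "\<And>n. \<phi> n \<in> finsupp" "\<And>n. D (\<lambda>x. v x - \<phi> n x)"
    and lim: "(\<lambda>n. q (\<lambda>x. v x - \<phi> n x)) \<longlonglongrightarrow> 0" and Dv: "D v"
    using v unfolding QD_dom_iff by blast
  have eq: "(\<lambda>x. (u x - \<phi> n x) - (u x - v x)) = (\<lambda>x. v x - \<phi> n x)" for n by auto
  have "(\<lambda>n. q (\<lambda>x. u x - \<phi> n x)) \<longlonglongrightarrow> q (\<lambda>x. u x - v x)"
    by (rule q_continuous[OF D_diff[OF u finsupp_form_dom[OF \<phi>(1)]] D_diff[OF u Dv]]) (simp add: eq lim)
  moreover have "q u \<le> q (\<lambda>x. u x - \<phi> n x)" for n by (rule one_harmonic_le_finsupp[OF h \<phi>(1)])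
  ultimately show ?thesis by (intro LIMSEQ_le_const) auto
qed

lemma one_harmonic_in_QD_eq_zero:
  assumes h: "one_harmonic u" and v: "u \<in> QD_dom m b c"
  shows "u = (\<lambda>x. 0)"
proof
  fix x
  have u: "D u" using h by (simp add: one_harmonic_def)
  have "q u \<le> 0" using one_harmonic_le_QD[OF h v] q_zero by simp
  then have "m x * (cmod (u x))\<^sup>2 \<le> 0" using q_term_le[OF u, of x] by linarith
  then show "u x = 0" using m_pos[of x] by (simp add: mult_le_0_iff)
qed

end

section \<open>Minimising the distance to \<open>C\<^sub>c(V)\<close>\<close>

context graph
begin

definition minimizing :: "('v \<Rightarrow> complex) \<Rightarrow> real \<Rightarrow> (nat \<Rightarrow> 'v \<Rightarrow> complex) \<Rightarrow> bool" where
  "minimizing w d \<phi> \<longleftrightarrow> (\<forall>n. \<phi> n \<in> finsupp) \<and> (\<forall>\<psi>\<in>finsupp. d \<le> q (\<lambda>x. w x - \<psi> x))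
     \<and> (\<forall>n. q (\<lambda>x. w x - \<phi> n x) \<le> d + tol n)"

lemma minimizing_exists: "\<exists>d \<phi>. minimizing w d \<phi>"
proof -
  define S where "S = (\<lambda>\<psi>. q (\<lambda>x. w x - \<psi> x)) ` finsupp"
  have "(\<lambda>x. 0) \<in> finsupp" by (simp add: finsupp_def)
  then have ne: "S \<noteq> {}" unfolding S_def by blast
  have bdd: "bdd_below S" unfolding S_def using q_nonneg by (intro bdd_belowI[of _ 0]) auto
  have low: "\<forall>\<psi>\<in>finsupp. Inf S \<le> q (\<lambda>x. w x - \<psi> x)"
    using bdd unfolding S_def by (auto intro: cInf_lower)
  have "\<exists>\<psi>. \<psi> \<in> finsupp \<and> q (\<lambda>x. w x - \<psi> x) \<le> Inf S + tol n" for n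
  proof -
    have "Inf S < Inf S + tol n" using tol_pos[of n] by simp
    then obtain y where "y \<in> S" "y < Inf S + tol n" using cInf_lessD[OF ne] by blast
    then show ?thesis unfolding S_def by force
  qed
  then obtain \<phi> where "\<forall>n. \<phi> n \<in> finsupp \<and> q (\<lambda>x. w x - \<phi> n x) \<le> Inf S + tol n"
    using choice[of "\<lambda>n \<psi>. \<psi> \<in> finsupp \<and> q (\<lambda>x. w x - \<psi> x) \<le> Inf S + tol n"] by blast
  then show ?thesis using low unfolding minimizing_def by blast
qed

text \<open>By the parallelogram law and convexity of \<open>C\<^sub>c(V)\<close>, a minimising sequence is Cauchy.\<close>

lemma minimizing_cauchy:
  assumes w: "D w" and min: "minimizing w d \<phi>"
  shows "q (\<lambda>x. (w x - \<phi> n x) - (w x - \<phi> k x)) \<le> 2 * tol n + 2 * tol k"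
proof -
  define H where "H n = (\<lambda>x. w x - \<phi> n x)" for n
  have \<phi>: "\<phi> n \<in> finsupp" for n using min by (simp add: minimizing_def)
  have H: "D (H n)" for n unfolding H_def by (rule D_diff[OF w finsupp_form_dom[OF \<phi>]])
  have "(\<lambda>x. (1/2) * \<phi> n x + (1/2) * \<phi> k x) \<in> finsupp" by (rule finsupp_lincomb[OF \<phi> \<phi>])
  then have "d \<le> q (\<lambda>x. w x - ((1/2) * \<phi> n x + (1/2) * \<phi> k x))"
    using min by (simp add: minimizing_def)
  also have "(\<lambda>x. w x - ((1/2) * \<phi> n x + (1/2) * \<phi> k x)) = (\<lambda>x. (1/2) * (H n x + H k x))"
    by (simp add: H_def algebra_simps)
  also have "q \<dots> = q (\<lambda>x. H n x + H k x) / 4"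
    using q_scale[OF D_add[OF H H], of "1/2" n k] by (simp add: power2_eq_square)
  finally have midpoint: "4 * d \<le> q (\<lambda>x. H n x + H k x)" by simp
  have up: "q (H j) \<le> d + tol j" for j using min by (simp add: minimizing_def H_def)
  have "q (\<lambda>x. H n x + H k x) + q (\<lambda>x. H n x - H k x) = 2 * q (H n) + 2 * q (H k)"
    by (rule q_parallelogram[OF H H])
  then show ?thesis using midpoint up[of n] up[of k] unfolding H_def by linarith
qed

lemma minimizing_converges:
  assumes w: "D w" and min: "minimizing w d \<phi>"
  obtains h where "D h" "\<And>x. (\<lambda>n. w x - \<phi> n x) \<longlonglongrightarrow> h x"
    "(\<lambda>n. q (\<lambda>x. (w x - \<phi> n x) - h x)) \<longlonglongrightarrow> 0"
proof -
  define H where "H n = (\<lambda>x. w x - \<phi> n x)" for n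
  have H: "D (H n)" for n
    unfolding H_def using D_diff[OF w finsupp_form_dom] min by (simp add: minimizing_def)
  have cauchy: "q (\<lambda>x. H n x - H k x) \<le> 2 * tol n + 2 * tol k" for n k
    unfolding H_def by (rule minimizing_cauchy[OF w min])
  define h where "h x = lim (\<lambda>n. H n x)" for x
  have "convergent (\<lambda>n. H n x)" for x
  proof (rule convergent_if_sq_dist_le[OF m_pos])
    show "(\<lambda>n. 2 * tol n) \<longlonglongrightarrow> 0" using tendsto_mult_right_zero[OF tol_tendsto] by simp
    fix n k
    have "m x * (cmod ((\<lambda>y. H n y - H k y) x))\<^sup>2 \<le> q (\<lambda>y. H n y - H k y)"
      by (rule q_term_le[OF D_diff[OF H H]])
    then show "m x * (cmod (H n x - H k x))\<^sup>2 \<le> 2 * tol n + 2 * tol k" using cauchy[of n k] by simp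
  qed
  then have lim: "(\<lambda>n. H n x) \<longlonglongrightarrow> h x" for x
    by (simp add: h_def convergent_LIMSEQ_iff)
  have tail: "D (\<lambda>x. H n x - h x)" "q (\<lambda>x. H n x - h x) \<le> 3 * (4 * tol n)" for n
  proof -
    have "q (\<lambda>x. H n x - H (k + n) x) \<le> 4 * tol n" for k
      using cauchy[of n "k + n"] tol_antimono[of n "k + n"] by simp
    moreover have "(\<lambda>k. H n x - H (k + n) x) \<longlonglongrightarrow> H n x - h x" for x
      by (intro tendsto_diff tendsto_const LIMSEQ_ignore_initial_segment lim)
    ultimately show "D (\<lambda>x. H n x - h x)" "q (\<lambda>x. H n x - h x) \<le> 3 * (4 * tol n)"
      using q_fatou[of "\<lambda>k x. H n x - H (k + n) x" "4 * tol n" "\<lambda>x. H n x - h x"] D_diff[OF H H] by simp_all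
  qed
  have "D (\<lambda>x. H 0 x - (H 0 x - h x))" by (rule D_diff[OF H tail(1)])
  then have "D h" by simp
  moreover have "(\<lambda>n. q (\<lambda>x. H n x - h x)) \<longlonglongrightarrow> 0"
  proof (rule tendsto_sandwich[of "\<lambda>n. 0" _ _ "\<lambda>n. 12 * tol n"])
    show "(\<lambda>n. 12 * tol n) \<longlonglongrightarrow> 0" using tendsto_mult_right_zero[OF tol_tendsto] by simp
    show "\<forall>\<^sub>F n in sequentially. 0 \<le> q (\<lambda>x. H n x - h x)" by (simp add: q_nonneg)
    show "\<forall>\<^sub>F n in sequentially. q (\<lambda>x. H n x - h x) \<le> 12 * tol n" using tail(2) by simp
  qed simp
  ultimately show ?thesis using that lim unfolding H_def by simp
qed

text \<open>The limit \<open>h\<close> lies in \<open>w + D(Q\<^sup>D)\<close> and minimises the form norm on \<open>h + C\<^sub>c(V)\<close>;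
  in particular it is 1-harmonic, and nonzero unless \<open>w \<in> D(Q\<^sup>D)\<close>.\<close>

lemma minimizing_limit_one_harmonic:
  assumes w: "D w" and min: "minimizing w d \<phi>" and h: "D h"
    and lim: "(\<lambda>n. q (\<lambda>x. (w x - \<phi> n x) - h x)) \<longlonglongrightarrow> 0"
  shows "one_harmonic h"
proof -
  have \<phi>: "\<phi> n \<in> finsupp" for n using min by (simp add: minimizing_def)
  have H: "D (\<lambda>x. w x - \<phi> n x)" for n by (rule D_diff[OF w finsupp_form_dom[OF \<phi>]])
  have lower: "d \<le> q (\<lambda>x. h x - \<psi> x)" if \<psi>: "\<psi> \<in> finsupp" for \<psi>
  proof -
    have eq: "(\<lambda>x. (w x - \<phi> n x - \<psi> x) - (h x - \<psi> x)) = (\<lambda>x. (w x - \<phi> n x) - h x)" for n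
      by (simp add: algebra_simps)
    have "(\<lambda>n. q (\<lambda>x. (w x - \<phi> n x) - \<psi> x)) \<longlonglongrightarrow> q (\<lambda>x. h x - \<psi> x)"
      using finsupp_form_dom[OF \<psi>] by (intro q_continuous D_diff H h) (simp_all only: eq lim)
    moreover have "d \<le> q (\<lambda>x. (w x - \<phi> n x) - \<psi> x)" for n
    proof -
      have "(\<lambda>x. 1 * \<phi> n x + 1 * \<psi> x) \<in> finsupp" by (rule finsupp_lincomb[OF \<phi> \<psi>])
      then show ?thesis using min unfolding minimizing_def by (simp add: diff_diff_eq)
    qed
    ultimately show ?thesis by (intro LIMSEQ_le_const) auto
  qed
  have "(\<lambda>n. q (\<lambda>x. w x - \<phi> n x)) \<longlonglongrightarrow> q h" by (rule q_continuous[OF H h lim])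
  moreover have "(\<lambda>n. d + tol n) \<longlonglongrightarrow> d" using tendsto_add[OF tendsto_const tol_tendsto, of d] by simp
  ultimately have "q h \<le> d" using min unfolding minimizing_def by (intro LIMSEQ_le) auto
  then show ?thesis using lower by (intro one_harmonic_if_minimal[OF h]) force
qed

lemma minimizing_limit_nonzero:
  assumes w: "D w" and not_QD: "w \<notin> QD_dom m b c" and min: "minimizing w d \<phi>"
    and lim: "(\<lambda>n. q (\<lambda>x. (w x - \<phi> n x) - h x)) \<longlonglongrightarrow> 0"
  shows "h \<noteq> (\<lambda>x. 0)"
proof
  assume "h = (\<lambda>x. 0)"
  then have "w \<in> QD_dom m b c"
    using lim min w by (intro QD_dom_intro[of _ \<phi>]) (auto simp: minimizing_def)
  then show False using not_QD by blast
qed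

lemma one_harmonic_exists:
  assumes "QN_dom m b c \<noteq> QD_dom m b c"
  shows "\<exists>u. one_harmonic u \<and> u \<noteq> (\<lambda>x. 0)"
proof -
  have "QD_dom m b c \<subseteq> QN_dom m b c" unfolding QD_dom_def by auto
  then obtain w where "w \<in> QN_dom m b c" and not_QD: "w \<notin> QD_dom m b c" using assms by blast
  then have w: "D w" by (simp add: QN_dom_iff)
  obtain d \<phi> where min: "minimizing w d \<phi>" using minimizing_exists by blast
  obtain h where "D h" "(\<lambda>n. q (\<lambda>x. (w x - \<phi> n x) - h x)) \<longlonglongrightarrow> 0"
    using minimizing_converges[OF w min] by blast
  then show ?thesis
    using minimizing_limit_one_harmonic[OF w min] minimizing_limit_nonzero[OF w not_QD min] by blast
qed

end

section \<open>Bounded solutions via truncation\<close>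

context graph
begin

lemma clip_form_dom:
  assumes r: "0 \<le> r" and g: "D g"
  shows "D (\<lambda>x. clip r (g x))" "q (\<lambda>x. clip r (g x)) \<le> q g"
proof -
  have le0: "cmod (clip r a) \<le> cmod a" for a using clip_lipschitz[OF r, of a 0] clip_zero[OF r] by simp
  have le_grad: "cmod (grad (\<lambda>x. clip r (g x)) p) \<le> cmod (grad g p)" for p
    unfolding grad_def using clip_lipschitz[OF r] by simp
  have E: "wsummable (edge_weight b) (grad (\<lambda>x. clip r (g x)))"
      "wnorm2 (edge_weight b) (grad (\<lambda>x. clip r (g x))) \<le> wnorm2 (edge_weight b) (grad g)"
    using wsummable_mono[of "edge_weight b", OF edge_weight_nonneg _ le_grad] g unfolding form_dom_def by auto
  have K: "wsummable c (\<lambda>x. clip r (g x))" "wnorm2 c (\<lambda>x. clip r (g x)) \<le> wnorm2 c g"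
    using wsummable_mono[of c, OF c_nonneg _ le0] g unfolding form_dom_def by auto
  have M: "wsummable m (\<lambda>x. clip r (g x))" "wnorm2 m (\<lambda>x. clip r (g x)) \<le> wnorm2 m g"
    using wsummable_mono[of m, OF m_nonneg _ le0] g unfolding form_dom_def by auto
  show "D (\<lambda>x. clip r (g x))" using E K M unfolding form_dom_def by auto
  show "q (\<lambda>x. clip r (g x)) \<le> q g" using E K M unfolding form_norm2_def by auto
qed

text \<open>Since \<open>clip\<close> is monotone, every term of \<open>B(u, clip r \<circ> u)\<close> has nonnegative real part, and
  the measure term at a vertex \<open>x\<^sub>0\<close> with \<open>|u(x\<^sub>0)| = r > 0\<close> is strictly positive.\<close>

lemma Re_form_inner_clip_pos:
  assumes u: "D u" and x0: "u x0 \<noteq> 0"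
  shows "0 < Re (B u (\<lambda>x. clip (cmod (u x0)) (u x)))"
proof -
  define r where "r = cmod (u x0)"
  define w where "w = (\<lambda>x. clip r (u x))"
  have r: "0 < r" using x0 by (simp add: r_def)
  have w: "D w" unfolding w_def using clip_form_dom(1)[OF _ u] r by simp
  have mono: "0 \<le> Re (u x * cnj (w x))" for x
    using clip_monotone[of r "u x" 0] clip_zero[of r] r by (simp add: w_def)
  have mono_grad: "0 \<le> Re (grad u p * cnj (grad w p))" for p
    using clip_monotone[of r "u (fst p)" "u (snd p)"] r by (simp add: grad_def w_def)
  have "edge_weight b p * Re (grad u p * cnj (grad w p)) \<le> Re (winner (edge_weight b) (grad u) (grad w))" for p
    by (rule winner_Re_term_le[of "edge_weight b", OF edge_weight_nonneg])
      (use u w mono_grad in \<open>auto simp: form_dom_def\<close>)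
  moreover have "0 \<le> edge_weight b p * Re (grad u p * cnj (grad w p))" for p
    by (intro mult_nonneg_nonneg edge_weight_nonneg mono_grad)
  ultimately have E: "0 \<le> Re (winner (edge_weight b) (grad u) (grad w))" by (meson order_trans)
  have "c x0 * Re (u x0 * cnj (w x0)) \<le> Re (winner c u w)"
    by (rule winner_Re_term_le[of c, OF c_nonneg]) (use u w mono in \<open>auto simp: form_dom_def\<close>)
  moreover have "0 \<le> c x0 * Re (u x0 * cnj (w x0))" by (intro mult_nonneg_nonneg c_nonneg mono)
  ultimately have K: "0 \<le> Re (winner c u w)" by linarith
  have "w x0 = u x0" unfolding w_def by (rule clip_self) (use r in \<open>simp_all add: r_def\<close>)
  then have "Re (u x0 * cnj (w x0)) = (cmod (u x0))\<^sup>2" by (simp add: complex_norm_square[symmetric])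
  then have "0 < m x0 * Re (u x0 * cnj (w x0))" using m_pos[of x0] x0 by simp
  also have "\<dots> \<le> Re (winner m u w)"
    by (rule winner_Re_term_le[of m, OF m_nonneg]) (use u w mono in \<open>auto simp: form_dom_def\<close>)
  finally show ?thesis using E K unfolding form_inner_def w_def r_def by simp
qed

text \<open>A truncation of a nonzero 1-harmonic function is not in \<open>D(Q\<^sup>D)\<close>: otherwise
  \<open>q(u) \<le> q(u - s w) = q(u) - 2 s Re B(u, w) + s\<^sup>2 q(w)\<close> for all \<open>s > 0\<close>.\<close>

lemma clip_one_harmonic_not_QD:
  assumes h: "one_harmonic u" and x0: "u x0 \<noteq> 0"
  shows "(\<lambda>x. clip (cmod (u x0)) (u x)) \<notin> QD_dom m b c" (is "?w \<notin> _")
proof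
  assume w_QD: "?w \<in> QD_dom m b c"
  have u: "D u" using h by (simp add: one_harmonic_def)
  have w: "D ?w" using w_QD by (simp add: QD_dom_iff)
  have "Re (B u ?w) \<le> 0"
  proof (rule nonpos_if_quadratic_nonneg)
    fix s :: real assume "0 < s"
    have "q u \<le> q (\<lambda>x. u x - complex_of_real s * ?w x)"
      by (rule one_harmonic_le_QD[OF h QD_dom_scale[OF w_QD]])
    also have "\<dots> = q u - 2 * (s * Re (B u ?w)) + s\<^sup>2 * q ?w"
      using q_expand[OF u w, of "complex_of_real s"] by simp
    finally show "2 * s * Re (B u ?w) \<le> s\<^sup>2 * q ?w" by simp
  qed
  then show False using Re_form_inner_clip_pos[OF u x0] by simp
qed

lemma minimizing_clip:
  assumes r: "0 \<le> r" and w: "D w" and w_le: "\<And>x. cmod (w x) \<le> r" and min: "minimizing w d \<phi>"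
  shows "minimizing w d (\<lambda>n x. w x - clip r (w x - \<phi> n x))"
  unfolding minimizing_def
proof (intro conjI allI)
  fix n
  have \<phi>: "\<phi> n \<in> finsupp" using min by (simp add: minimizing_def)
  have "{x. w x - clip r (w x - \<phi> n x) \<noteq> 0} \<subseteq> {x. \<phi> n x \<noteq> 0}"
    using clip_self[OF r] w_le by auto
  then show "(\<lambda>x. w x - clip r (w x - \<phi> n x)) \<in> finsupp"
    using \<phi> unfolding finsupp_def by (auto intro: finite_subset)
  have "q (\<lambda>x. clip r (w x - \<phi> n x)) \<le> q (\<lambda>x. w x - \<phi> n x)"
    by (rule clip_form_dom(2)[OF r D_diff[OF w finsupp_form_dom[OF \<phi>]]])
  also have "\<dots> \<le> d + tol n" using min by (simp add: minimizing_def)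
  finally show "q (\<lambda>x. w x - (w x - clip r (w x - \<phi> n x))) \<le> d + tol n" by simp
qed (use min in \<open>simp add: minimizing_def\<close>)

text \<open>(ii) \<open>\<Rightarrow>\<close> (iii): minimise the distance from the truncation \<open>w\<close> of \<open>u\<close> to \<open>C\<^sub>c(V)\<close> along a
  truncated minimising sequence; the limit is 1-harmonic, nonzero, and bounded by the radius.\<close>

lemma bounded_one_harmonic_exists:
  assumes h: "one_harmonic u" and nonzero: "u \<noteq> (\<lambda>x. 0)"
  shows "\<exists>v. one_harmonic v \<and> v \<noteq> (\<lambda>x. 0) \<and> v \<in> linfty"
proof -
  obtain x0 where x0: "u x0 \<noteq> 0" using nonzero by auto
  define r where "r = cmod (u x0)"
  define w where "w = (\<lambda>x. clip r (u x))"
  have r: "0 \<le> r" by (simp add: r_def)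
  have w: "D w" unfolding w_def using clip_form_dom(1)[OF r] h by (simp add: one_harmonic_def)
  have w_le: "cmod (w x) \<le> r" for x unfolding w_def by (rule clip_bound[OF r])
  have not_QD: "w \<notin> QD_dom m b c" unfolding w_def r_def by (rule clip_one_harmonic_not_QD[OF h x0])
  obtain d \<phi>\<^sub>0 where "minimizing w d \<phi>\<^sub>0" using minimizing_exists by blast
  then have min: "minimizing w d (\<lambda>n x. w x - clip r (w x - \<phi>\<^sub>0 n x))"
    by (rule minimizing_clip[OF r w w_le])
  obtain v where v: "D v" and lim: "\<And>x. (\<lambda>n. clip r (w x - \<phi>\<^sub>0 n x)) \<longlonglongrightarrow> v x"
    and qlim: "(\<lambda>n. q (\<lambda>x. clip r (w x - \<phi>\<^sub>0 n x) - v x)) \<longlonglongrightarrow> 0"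
    using minimizing_converges[OF w min] by auto
  have "cmod (v x) \<le> r" for x
    using clip_bound[OF r] by (intro LIMSEQ_le_const2[OF tendsto_norm[OF lim]]) auto
  then have "v \<in> linfty" unfolding linfty_def by blast
  then show ?thesis
    using minimizing_limit_one_harmonic[OF w min v] minimizing_limit_nonzero[OF w not_QD min] qlim by auto
qed

end

theorem mainTheorem9:
  fixes m :: "'v::countable \<Rightarrow> real" and b :: "'v \<Rightarrow> 'v \<Rightarrow> real" and c :: "'v \<Rightarrow> real"
  assumes "is_graph m b c"
  shows "(QN_dom m b c \<noteq> QD_dom m b c
           \<longleftrightarrow> (\<exists>u \<in> QN_dom m b c. u \<noteq> (\<lambda>x. 0) \<and> u \<in> Ftilde b \<and> (\<forall>x. Ltilde m b c u x + u x = 0)))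
       \<and> (QN_dom m b c \<noteq> QD_dom m b c
           \<longleftrightarrow> (\<exists>u \<in> QN_dom m b c \<inter> linfty. u \<noteq> (\<lambda>x. 0) \<and> u \<in> Ftilde b \<and> (\<forall>x. Ltilde m b c u x + u x = 0)))"
proof -
  interpret graph m b c using assms by unfold_locales
  have solution_iff: "(u \<in> QN_dom m b c \<and> u \<noteq> (\<lambda>x. 0) \<and> u \<in> Ftilde b \<and> (\<forall>x. Ltilde m b c u x + u x = 0))
      \<longleftrightarrow> one_harmonic u \<and> u \<noteq> (\<lambda>x. 0)" for u
    unfolding one_harmonic_def using QN_dom_iff form_dom_subset_Ftilde by blast
  have i_ii: "QN_dom m b c \<noteq> QD_dom m b c \<longleftrightarrow> (\<exists>u. one_harmonic u \<and> u \<noteq> (\<lambda>x. 0))"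
  proof
    show "\<exists>u. one_harmonic u \<and> u \<noteq> (\<lambda>x. 0)" if "QN_dom m b c \<noteq> QD_dom m b c"
      using one_harmonic_exists[OF that] .
    show "QN_dom m b c \<noteq> QD_dom m b c" if "\<exists>u. one_harmonic u \<and> u \<noteq> (\<lambda>x. 0)"
      using that one_harmonic_in_QD_eq_zero QN_dom_iff unfolding one_harmonic_def by blast
  qed
  have ii_iii: "(\<exists>u. one_harmonic u \<and> u \<noteq> (\<lambda>x. 0)) \<longleftrightarrow> (\<exists>u. one_harmonic u \<and> u \<noteq> (\<lambda>x. 0) \<and> u \<in> linfty)"
    using bounded_one_harmonic_exists by blast
  show ?thesis using i_ii ii_iii solution_iff by blast
qed
end
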